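(* Let $M$ be an ordinal monoid with merge and $A\subseteq M$ nonempty. Then at least one of the following holds: (1) $a\cdot\mathrm{Cl}^{+}_{\sharp}(A)\subsetneq\mathrm{Cl}^{+}_{\sharp}(A)$ for some $a\in A$; (2) $\mathrm{Cl}^{+}_{\sharp}(A)\cdot a\subsetneq\mathrm{Cl}^{+}_{\sharp}(A)$ for some $a\in A$; (3) $\mathrm{Cl}^{+}_{\sharp}(A)$ has a maximum element for the order $\le$.
   Context: An ordinal monoid has generalised product $\pi$ on countable-ordinal-length words; $1=\pi(\varepsilon)$, $x\cdot y=\pi(xy)$, $x^\omega=\pi(xxx\cdots)$; ordered by $\le$ if $u\le v$ letterwise implies $\pi(u)\le\pi(v)$. In a finite semigroup $x^!$ is the idempotent power, $x^{!+k}$ the eventual value of $x^{n!+k}$. Ordinal monoid with merge: $(M,1,\le,\cdot,-^\omega,-^\sharp)$, $M$ finite, $(M,1,\le,\cdot,-^\omega)$ the presentation of an ordered finite ordinal monoid, $-^\sharp\colon M\to M$ monotone with $a^{!+k}\le a^\sharp$, $(a^!)^\sharp=a^!$, $a^\sharp a^\sharp=(a^\sharp)^\sharp=a^\sharp$, $(ab)^\sharp=a(ba)^\sharp b$ for all $a,b$, $k\in\mathbb Z$. $\mathrm{Cl}^{+}_{\sharp}(A)$ is the closure of $A$ under $\cdot$ and $-^\sharp$; for $a\in M$, $X\subseteq M$: $a\cdot X=\{a\cdot x:x\in X\}$, $X\cdot a=\{x\cdot a:x\in X\}$. *)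

theory Defs
  imports Main
begin

primrec mpow :: "('a \<Rightarrow> 'a \<Rightarrow> 'a) \<Rightarrow> 'a \<Rightarrow> 'a \<Rightarrow> nat \<Rightarrow> 'a" where
  "mpow mult one x 0 = one"
| "mpow mult one x (Suc n) = mult x (mpow mult one x n)"

definition idem_pow_plus :: "('a \<Rightarrow> 'a \<Rightarrow> 'a) \<Rightarrow> 'a \<Rightarrow> 'a \<Rightarrow> int \<Rightarrow> 'a" where
  "idem_pow_plus mult one x k =
     (THE y. \<exists>N. \<forall>n\<ge>N. mpow mult one x (nat (int (fact n) + k)) = y)"

definition idem_pow :: "('a \<Rightarrow> 'a \<Rightarrow> 'a) \<Rightarrow> 'a \<Rightarrow> 'a \<Rightarrow> 'a" where
  "idem_pow mult one x = idem_pow_plus mult one x 0"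

text \<open>Presentation of an ordered finite ordinal monoid (M,1,le,mult,omega):
  finite monoid with omega-power satisfying the Bedon--Carton axioms,
  le a partial order, mult and omega monotone.\<close>
definition ordered_ordinal_monoid ::
  "'a set \<Rightarrow> 'a \<Rightarrow> ('a \<Rightarrow> 'a \<Rightarrow> bool) \<Rightarrow> ('a \<Rightarrow> 'a \<Rightarrow> 'a) \<Rightarrow> ('a \<Rightarrow> 'a) \<Rightarrow> bool" where
  "ordered_ordinal_monoid M one le mult omega \<longleftrightarrow>
     finite M \<and> one \<in> M \<and>
     (\<forall>x\<in>M. \<forall>y\<in>M. mult x y \<in> M) \<and> (\<forall>x\<in>M. omega x \<in> M) \<and>
     (\<forall>x\<in>M. le x x) \<and>
     (\<forall>x\<in>M. \<forall>y\<in>M. le x y \<and> le y x \<longrightarrow> x = y) \<and>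
     (\<forall>x\<in>M. \<forall>y\<in>M. \<forall>z\<in>M. le x y \<and> le y z \<longrightarrow> le x z) \<and>
     (\<forall>x\<in>M. \<forall>y\<in>M. \<forall>z\<in>M. mult (mult x y) z = mult x (mult y z)) \<and>
     (\<forall>x\<in>M. mult one x = x \<and> mult x one = x) \<and>
     (\<forall>x\<in>M. \<forall>n::nat. n \<ge> 1 \<longrightarrow> omega (mpow mult one x n) = omega x) \<and>
     (\<forall>x\<in>M. \<forall>y\<in>M. mult x (omega (mult y x)) = omega (mult x y)) \<and>
     (\<forall>x\<in>M. \<forall>x'\<in>M. \<forall>y\<in>M. \<forall>y'\<in>M. le x x' \<and> le y y' \<longrightarrow> le (mult x y) (mult x' y')) \<and>
     (\<forall>x\<in>M. \<forall>y\<in>M. le x y \<longrightarrow> le (omega x) (omega y))"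

definition ordinal_monoid_with_merge ::
  "'a set \<Rightarrow> 'a \<Rightarrow> ('a \<Rightarrow> 'a \<Rightarrow> bool) \<Rightarrow> ('a \<Rightarrow> 'a \<Rightarrow> 'a) \<Rightarrow> ('a \<Rightarrow> 'a) \<Rightarrow> ('a \<Rightarrow> 'a) \<Rightarrow> bool" where
  "ordinal_monoid_with_merge M one le mult omega sharp \<longleftrightarrow>
     ordered_ordinal_monoid M one le mult omega \<and>
     (\<forall>a\<in>M. sharp a \<in> M) \<and>
     (\<forall>a\<in>M. \<forall>b\<in>M. le a b \<longrightarrow> le (sharp a) (sharp b)) \<and>
     (\<forall>a\<in>M. \<forall>k::int. le (idem_pow_plus mult one a k) (sharp a)) \<and>
     (\<forall>a\<in>M. sharp (idem_pow mult one a) = idem_pow mult one a) \<and>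
     (\<forall>a\<in>M. mult (sharp a) (sharp a) = sharp a \<and> sharp (sharp a) = sharp a) \<and>
     (\<forall>a\<in>M. \<forall>b\<in>M. sharp (mult a b) = mult a (mult (sharp (mult b a)) b))"

inductive_set cl_plus_sharp :: "('a \<Rightarrow> 'a \<Rightarrow> 'a) \<Rightarrow> ('a \<Rightarrow> 'a) \<Rightarrow> 'a set \<Rightarrow> 'a set"
  for mult :: "'a \<Rightarrow> 'a \<Rightarrow> 'a" and sharp :: "'a \<Rightarrow> 'a" and A :: "'a set" where
  base: "a \<in> A \<Longrightarrow> a \<in> cl_plus_sharp mult sharp A"
| prod: "x \<in> cl_plus_sharp mult sharp A \<Longrightarrow> y \<in> cl_plus_sharp mult sharp A \<Longrightarrow>
           mult x y \<in> cl_plus_sharp mult sharp A"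
| shrp: "x \<in> cl_plus_sharp mult sharp A \<Longrightarrow> sharp x \<in> cl_plus_sharp mult sharp A"

end

theory Submission
  imports Defs
begin

text \<open>If every a in A maps C = Cl(A) onto itself by left and by right multiplication,
  then, M being finite, some power of a acts as a two-sided identity u on C. Such an identity
  is unique, so u is the same for all generators, and a^! = u, a^(!+1) = a; the axiom
  a^(!+k) <= a^sharp then gives u <= a^sharp and a <= a^sharp. Multiplying the a^sharp yields
  p in C above all of A, and p^sharp, an idempotent fixed by sharp lying above every
  generator, is above every element of C.\<close>

lemma idem_pow_plus_eqI:
  assumes "\<And>n. n \<ge> N \<Longrightarrow> mpow mult one x (nat (int (fact n) + k)) = y"
  shows "idem_pow_plus mult one x k = y"
  unfolding idem_pow_plus_def
proof (rule the_equality)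
  show "\<exists>N. \<forall>n\<ge>N. mpow mult one x (nat (int (fact n) + k)) = y" using assms by blast
next
  fix z assume "\<exists>N. \<forall>n\<ge>N. mpow mult one x (nat (int (fact n) + k)) = z"
  then obtain N' where "\<forall>n\<ge>N'. mpow mult one x (nat (int (fact n) + k)) = z" by blast
  then show "z = y" using assms[of "max N N'"] by simp
qed

locale finite_monoid_on =
  fixes M :: "'a set" and one :: 'a and mult :: "'a \<Rightarrow> 'a \<Rightarrow> 'a"
  assumes finite_carrier: "finite M"
    and one_closed: "one \<in> M"
    and mult_closed: "x \<in> M \<Longrightarrow> y \<in> M \<Longrightarrow> mult x y \<in> M"
    and mult_assoc: "x \<in> M \<Longrightarrow> y \<in> M \<Longrightarrow> z \<in> M \<Longrightarrow> mult (mult x y) z = mult x (mult y z)"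
    and mult_one_left: "x \<in> M \<Longrightarrow> mult one x = x"
    and mult_one_right: "x \<in> M \<Longrightarrow> mult x one = x"
begin

abbreviation pow :: "'a \<Rightarrow> nat \<Rightarrow> 'a" where
  "pow \<equiv> mpow mult one"

definition local_identity :: "'a set \<Rightarrow> 'a \<Rightarrow> bool" where
  "local_identity C e \<longleftrightarrow> (\<forall>c\<in>C. mult e c = c \<and> mult c e = c)"

lemma pow_closed: "a \<in> M \<Longrightarrow> pow a n \<in> M"
  by (induction n) (auto simp: one_closed mult_closed)

lemma pow_add: "a \<in> M \<Longrightarrow> pow a (m + n) = mult (pow a m) (pow a n)"
  by (induction m) (auto simp: mult_one_left pow_closed mult_assoc)

lemma pow_Suc_right: "a \<in> M \<Longrightarrow> pow a (Suc n) = mult (pow a n) a"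
  using pow_add[of a n 1] by (simp add: mult_one_right)

lemma pow_repeats:
  assumes "a \<in> M"
  obtains i j where "i < j" "pow a i = pow a j"
proof -
  have "range (pow a) \<subseteq> M" using pow_closed[OF assms] by blast
  then have "\<not> inj (pow a)"
    using finite_carrier finite_imageD finite_subset infinite_UNIV_nat by blast
  then obtain i j where "i \<noteq> j" "pow a i = pow a j" unfolding inj_def by blast
  then show thesis using that by (metis linorder_neqE_nat)
qed

lemma pow_image_left:
  assumes "C \<subseteq> M" "a \<in> M" "mult a ` C = C"
  shows "mult (pow a n) ` C = C"
proof (induction n)
  case 0 then show ?case using assms(1) by (auto simp: mult_one_left subset_iff)
next
  case (Suc n)
  have "mult (pow a (Suc n)) ` C = mult a ` mult (pow a n) ` C"
    using assms(1,2) by (force simp: image_image mult_assoc pow_closed)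
  then show ?case using Suc assms(3) by simp
qed

lemma pow_image_right:
  assumes "C \<subseteq> M" "a \<in> M" "(\<lambda>x. mult x a) ` C = C"
  shows "(\<lambda>x. mult x (pow a n)) ` C = C"
proof (induction n)
  case 0 then show ?case using assms(1) by (auto simp: mult_one_right subset_iff)
next
  case (Suc n)
  have "mult x (pow a (Suc n)) = mult (mult x (pow a n)) a" if "x \<in> C" for x
    using that assms(1,2) by (simp add: pow_Suc_right mult_assoc pow_closed subset_iff del: mpow.simps)
  then have "(\<lambda>x. mult x (pow a (Suc n))) ` C = (\<lambda>x. mult x a) ` (\<lambda>x. mult x (pow a n)) ` C"
    by (simp add: image_image cong: image_cong)
  then show ?case using Suc assms(3) by simp
qed

lemma local_identity_pow:
  assumes "C \<subseteq> M" "a \<in> C" "mult a ` C = C" "(\<lambda>x. mult x a) ` C = C"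
  obtains q where "q \<ge> 1" "pow a q \<in> C" "local_identity C (pow a q)"
proof -
  have aM: "a \<in> M" using assms(1,2) by blast
  obtain i j where ij: "i < j" "pow a i = pow a j" using pow_repeats[OF aM] .
  define q where "q = j - i"
  have shift: "pow a (q + i) = pow a i" "pow a (i + q) = pow a i"
    using ij by (simp_all add: q_def)
  have "mult (pow a q) c = c \<and> mult c (pow a q) = c" if "c \<in> C" for c
  proof
    \<comment> \<open>Surjectivity of the translations writes c as a^i d and as d' a^i.\<close>
    obtain d where d: "d \<in> C" "c = mult (pow a i) d"
      using pow_image_left[OF assms(1) aM assms(3), of i] \<open>c \<in> C\<close> by blast
    then show "mult (pow a q) c = c"
      using shift(1) assms(1) aM by (auto simp: pow_add pow_closed mult_assoc[symmetric])
    obtain d' where d': "d' \<in> C" "c = mult d' (pow a i)"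
      using pow_image_right[OF assms(1) aM assms(4), of i] \<open>c \<in> C\<close> by blast
    then show "mult c (pow a q) = c"
      using shift(2) assms(1) aM by (auto simp: pow_add pow_closed mult_assoc)
  qed
  moreover have "pow a q = mult (pow a (q - 1)) a"
    using ij pow_Suc_right[OF aM, of "q - 1"] by (simp add: q_def Suc_diff_Suc del: mpow.simps)
  then have "pow a q \<in> C"
    using pow_image_left[OF assms(1) aM assms(3)] assms(2) by (metis image_eqI)
  moreover have "q \<ge> 1" using ij by (simp add: q_def)
  ultimately show thesis using that by (simp add: local_identity_def)
qed

lemma idem_pow_plus_of_absorbing_pow:
  assumes aM: "a \<in> M" and "q \<ge> 1" and absorb: "mult (pow a q) a = a"
  shows "idem_pow_plus mult one a 0 = pow a q" and "idem_pow_plus mult one a 1 = a"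
proof -
  have periodic: "pow a (q * r + 1) = a" for r
  proof (induction r)
    case (Suc r)
    have "pow a (q * Suc r + 1) = mult (pow a q) (pow a (q * r + 1))"
      using pow_add[OF aM, of q "q * r + 1"] by (simp add: add.assoc)
    then show ?case using Suc absorb by simp
  qed (simp add: mult_one_right aM)
  have fact_pow: "pow a (fact n) = pow a q" if n: "n \<ge> q" for n
  proof -
    obtain r where r: "fact n = q * r" using dvd_fact[OF \<open>q \<ge> 1\<close> n] by blast
    then have "r \<ge> 1" by (metis fact_nonzero less_one mult_0_right not_le)
    then have "fact n = (q * (r - 1) + 1) + (q - 1)"
      using r \<open>q \<ge> 1\<close> by (cases r) (simp_all add: algebra_simps)
    then have "pow a (fact n) = mult (pow a (q * (r - 1) + 1)) (pow a (q - 1))"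
      using pow_add[OF aM] by presburger
    also have "\<dots> = pow a (Suc (q - 1))" using periodic by simp
    finally show ?thesis using \<open>q \<ge> 1\<close> by simp
  qed
  show "idem_pow_plus mult one a 0 = pow a q"
    by (rule idem_pow_plus_eqI[where N = q]) (simp add: fact_pow del: of_nat_fact)
  show "idem_pow_plus mult one a 1 = a"
  proof (rule idem_pow_plus_eqI[where N = q])
    fix n assume "n \<ge> q"
    have "nat (int (fact n) + 1) = Suc (fact n)" by (simp del: of_nat_fact)
    then show "pow a (nat (int (fact n) + 1)) = a"
      using fact_pow[OF \<open>n \<ge> q\<close>] absorb pow_Suc_right[OF aM] by (simp del: mpow.simps)
  qed
qed

end

locale monoid_with_merge = finite_monoid_on M one mult
  for M :: "'a set" and one :: 'a and mult :: "'a \<Rightarrow> 'a \<Rightarrow> 'a" +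
  fixes le :: "'a \<Rightarrow> 'a \<Rightarrow> bool" and sharp :: "'a \<Rightarrow> 'a"
  assumes le_refl: "x \<in> M \<Longrightarrow> le x x"
    and le_trans: "x \<in> M \<Longrightarrow> y \<in> M \<Longrightarrow> z \<in> M \<Longrightarrow> le x y \<Longrightarrow> le y z \<Longrightarrow> le x z"
    and mult_mono: "x \<in> M \<Longrightarrow> x' \<in> M \<Longrightarrow> y \<in> M \<Longrightarrow> y' \<in> M \<Longrightarrow> le x x' \<Longrightarrow> le y y' \<Longrightarrow>
      le (mult x y) (mult x' y')"
    and sharp_closed: "a \<in> M \<Longrightarrow> sharp a \<in> M"
    and sharp_mono: "a \<in> M \<Longrightarrow> b \<in> M \<Longrightarrow> le a b \<Longrightarrow> le (sharp a) (sharp b)"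
    and idem_pow_plus_le_sharp: "a \<in> M \<Longrightarrow> le (idem_pow_plus mult one a k) (sharp a)"
    and sharp_mult_self: "a \<in> M \<Longrightarrow> mult (sharp a) (sharp a) = sharp a"
    and sharp_sharp: "a \<in> M \<Longrightarrow> sharp (sharp a) = sharp a"

lemma ordinal_monoid_with_merge_imp_monoid_with_merge:
  assumes "ordinal_monoid_with_merge M one le mult omega sharp"
  shows "monoid_with_merge M one mult le sharp"
  using assms unfolding ordinal_monoid_with_merge_def ordered_ordinal_monoid_def
  by (elim conjE, unfold_locales) meson+

context monoid_with_merge
begin

abbreviation Cl :: "'a set \<Rightarrow> 'a set" where
  "Cl \<equiv> cl_plus_sharp mult sharp"

lemma Cl_subset: "A \<subseteq> M \<Longrightarrow> Cl A \<subseteq> M"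
  by (auto elim: cl_plus_sharp.induct intro: mult_closed sharp_closed)

lemma translations_subset_Cl:
  "a \<in> A \<Longrightarrow> mult a ` Cl A \<subseteq> Cl A" "a \<in> A \<Longrightarrow> (\<lambda>x. mult x a) ` Cl A \<subseteq> Cl A"
  by (auto intro: cl_plus_sharp.prod cl_plus_sharp.base)

lemma le_sharp_of_surjective_translations:
  assumes "A \<subseteq> M" "a \<in> A" "mult a ` Cl A = Cl A" "(\<lambda>x. mult x a) ` Cl A = Cl A"
    and "u \<in> Cl A" "local_identity (Cl A) u"
  shows "le u (sharp a)" and "le a (sharp a)"
proof -
  have CM: "Cl A \<subseteq> M" using Cl_subset[OF assms(1)] .
  have aC: "a \<in> Cl A" using assms(2) by (rule cl_plus_sharp.base)
  have aM: "a \<in> M" using assms(1,2) by blast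
  obtain q where q: "q \<ge> 1" "pow a q \<in> Cl A" "local_identity (Cl A) (pow a q)"
    using local_identity_pow[OF CM aC assms(3,4)] .
  have "pow a q = u"
    using q(2,3) assms(5,6) unfolding local_identity_def by metis
  moreover have "mult (pow a q) a = a" using q(3) aC by (simp add: local_identity_def)
  ultimately have "idem_pow_plus mult one a 0 = u" "idem_pow_plus mult one a 1 = a"
    using idem_pow_plus_of_absorbing_pow[OF aM q(1)] by simp_all
  then show "le u (sharp a)" "le a (sharp a)"
    using idem_pow_plus_le_sharp[OF aM] by metis+
qed

lemma finite_upper_bound_in_Cl:
  assumes "A \<subseteq> M" "u \<in> Cl A" "local_identity (Cl A) u" "finite B" "B \<subseteq> Cl A"
    and "\<And>b. b \<in> B \<Longrightarrow> le u (sharp b) \<and> le b (sharp b)"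
  shows "\<exists>p\<in>Cl A. le u p \<and> (\<forall>b\<in>B. le b p)"
  using assms(4-6)
proof (induction B rule: finite_induct)
  case empty
  then show ?case using assms(2) Cl_subset[OF assms(1)] le_refl by blast
next
  case (insert b B)
  have CM: "Cl A \<subseteq> M" using Cl_subset[OF assms(1)] .
  obtain p where p: "p \<in> Cl A" "le u p" "\<forall>c\<in>B. le c p" using insert by blast
  have bC: "b \<in> Cl A" and bb: "le u (sharp b)" "le b (sharp b)" using insert.prems by auto
  have uM: "u \<in> M" and pM: "p \<in> M" and bM: "b \<in> M" and sbM: "sharp b \<in> M"
    using CM assms(2) p(1) bC sharp_closed by auto
  \<comment> \<open>The new bound is p b^sharp; the identity u sits below both factors.\<close>
  have "le (mult c u) (mult p (sharp b))" if "c \<in> M" "le c p" for c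
    using mult_mono[OF that(1) pM uM sbM that(2) bb(1)] .
  moreover have "le (mult u b) (mult p (sharp b))"
    using mult_mono[OF uM pM bM sbM p(2) bb(2)] .
  moreover have "mult c u = c" if "c \<in> Cl A" for c
    using assms(3) that by (simp add: local_identity_def)
  moreover have "mult u b = b" using assms(3) bC by (simp add: local_identity_def)
  moreover have "mult p (sharp b) \<in> Cl A"
    using p(1) bC by (intro cl_plus_sharp.prod cl_plus_sharp.shrp)
  ultimately show ?case
    using p assms(2) insert.prems(1) CM by (metis insert_iff subsetD)
qed

lemma sharp_of_upper_bound_is_max:
  assumes "A \<subseteq> M" "p \<in> Cl A" "\<And>a. a \<in> A \<Longrightarrow> le a p" "\<And>a. a \<in> A \<Longrightarrow> le a (sharp a)"
    and "x \<in> Cl A"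
  shows "le x (sharp p)"
  using assms(5)
proof (induction rule: cl_plus_sharp.induct)
  case (base a)
  have "a \<in> M" "p \<in> M" using assms(1,2) base Cl_subset by auto
  then show ?case
    using le_trans sharp_closed sharp_mono assms(3,4) base by meson
next
  case (prod x y)
  have "p \<in> M" using assms(1,2) Cl_subset by auto
  then show ?case
    using mult_mono[of x "sharp p" y "sharp p"] prod Cl_subset[OF assms(1)] sharp_closed
      sharp_mult_self by auto
next
  case (shrp x)
  have "p \<in> M" using assms(1,2) Cl_subset by auto
  then show ?case
    using sharp_mono[of x "sharp p"] shrp Cl_subset[OF assms(1)] sharp_closed sharp_sharp by auto
qed

end

theorem lemma5p6:
  fixes M :: "'a set" and one :: 'a and le :: "'a \<Rightarrow> 'a \<Rightarrow> bool"
    and mult :: "'a \<Rightarrow> 'a \<Rightarrow> 'a" and omega sharp :: "'a \<Rightarrow> 'a" and A :: "'a set"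
  assumes "ordinal_monoid_with_merge M one le mult omega sharp"
    and "A \<subseteq> M" and "A \<noteq> {}"
  shows "(\<exists>a\<in>A. mult a ` cl_plus_sharp mult sharp A \<subset> cl_plus_sharp mult sharp A)
       \<or> (\<exists>a\<in>A. (\<lambda>x. mult x a) ` cl_plus_sharp mult sharp A \<subset> cl_plus_sharp mult sharp A)
       \<or> (\<exists>m\<in>cl_plus_sharp mult sharp A. \<forall>x\<in>cl_plus_sharp mult sharp A. le x m)"
proof (rule ccontr)
  interpret monoid_with_merge M one mult le sharp
    using assms(1) by (rule ordinal_monoid_with_merge_imp_monoid_with_merge)
  assume "\<not> ?thesis"
  then have no_left: "\<forall>a\<in>A. \<not> mult a ` Cl A \<subset> Cl A"
    and no_right: "\<forall>a\<in>A. \<not> (\<lambda>x. mult x a) ` Cl A \<subset> Cl A"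
    and no_max: "\<not> (\<exists>m\<in>Cl A. \<forall>x\<in>Cl A. le x m)"
    by simp_all
  have bij: "mult a ` Cl A = Cl A" "(\<lambda>x. mult x a) ` Cl A = Cl A" if "a \<in> A" for a
    using translations_subset_Cl[OF that] no_left no_right that by (simp_all add: psubset_eq)
  have CM: "Cl A \<subseteq> M" using Cl_subset[OF assms(2)] .
  obtain a0 where a0: "a0 \<in> A" using assms(3) by blast
  obtain q where u: "pow a0 q \<in> Cl A" "local_identity (Cl A) (pow a0 q)"
    using local_identity_pow[OF CM cl_plus_sharp.base[OF a0] bij[OF a0]] .
  have bounds: "le (pow a0 q) (sharp a) \<and> le a (sharp a)" if "a \<in> A" for a
    using le_sharp_of_surjective_translations[OF assms(2) that bij[OF that] u] by blast
  have "finite A" using assms(2) finite_carrier finite_subset by blast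
  moreover have "A \<subseteq> Cl A" by (rule subsetI) (rule cl_plus_sharp.base)
  ultimately obtain p where p: "p \<in> Cl A" "\<And>a. a \<in> A \<Longrightarrow> le a p"
    using finite_upper_bound_in_Cl[OF assms(2) u] bounds by (metis subsetD)
  have "\<forall>x\<in>Cl A. le x (sharp p)"
    using sharp_of_upper_bound_is_max[OF assms(2) p] bounds by blast
  moreover have "sharp p \<in> Cl A" using p(1) by (rule cl_plus_sharp.shrp)
  ultimately show False using no_max by blast
qed

end
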